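(* If $\mathcal{S}\in\mathscr{W}$ is $C^4$-smooth and has isolated umbilic points at its poles, then the umbilic slopes $\mu_0,\mu_\pi$ of $\mathcal{S}$ are greater than or equal to $3$.
   Context: $\mathscr{W}$ is the set of embedded $C^2$-smooth topological 2-spheres in $\mathbb{R}^3$ that are rotationally symmetric and strictly convex. A surface in $\mathscr{W}$ is parametrised by the inverse Gauss map with $\theta\in[0,\pi]$ the angle between the outward normal and the symmetry axis ($\theta=0,\pi$ are the poles). With support function $r(\theta)=\vec X\cdot\hat n$, the radii of curvature are $r_1=\frac{\cos^2\theta}{\sin\theta}\frac{d}{d\theta}\left(\frac{r}{\cos\theta}\right)$, $r_2=r''+r$, and the astigmatism is $s=r_2-r_1$; umbilic points are where $s=0$. The umbilic slopes are $\mu_0=\lim_{\theta\to0}\frac{r_2(\theta)-r_2(0)}{r_1(\theta)-r_1(0)}$ and $\mu_\pi=\lim_{\theta\to\pi}\frac{r_2(\theta)-r_2(\pi)}{r_1(\theta)-r_1(\pi)}$. *)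

theory Defs
  imports "HOL-Analysis.Analysis" "HOL-Library.Extended_Real"
begin

text \<open>A surface S in the class W is described, as in the paper, through its support
  function r(theta) = X . n, where theta is the angle between the outward normal n and
  the symmetry axis (theta = 0 and theta = pi are the poles).  r is taken as a function
  on the whole real line: it is the restriction of the support function of S to a
  meridian great circle of the unit sphere of normals, so it is even about 0 and about pi.\<close>

definition Ck_real :: "nat \<Rightarrow> (real \<Rightarrow> real) \<Rightarrow> bool" where
  "Ck_real k f \<longleftrightarrow>
     (\<forall>j<k. \<forall>x. ((deriv ^^ j) f) differentiable (at x)) \<and>
     continuous_on UNIV ((deriv ^^ k) f)"

text \<open>For 0 < theta < pi the paper's formula
  cos^2 theta / sin theta * d/dtheta (r / cos theta) equals r + r' cos theta / sin theta
  (the latter form is also meaningful at theta = pi/2); at the poles r1 is the limiting value.\<close>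
definition radius1_inner :: "(real \<Rightarrow> real) \<Rightarrow> real \<Rightarrow> real" where
  "radius1_inner r \<theta> = r \<theta> + deriv r \<theta> * cos \<theta> / sin \<theta>"

definition radius1 :: "(real \<Rightarrow> real) \<Rightarrow> real \<Rightarrow> real" where
  "radius1 r \<theta> =
     (if \<theta> = 0 then Lim (at_right 0) (radius1_inner r)
      else if \<theta> = pi then Lim (at_left pi) (radius1_inner r)
      else radius1_inner r \<theta>)"

definition radius2 :: "(real \<Rightarrow> real) \<Rightarrow> real \<Rightarrow> real" where
  "radius2 r \<theta> = deriv (deriv r) \<theta> + r \<theta>"

definition astigmatism :: "(real \<Rightarrow> real) \<Rightarrow> real \<Rightarrow> real" where
  "astigmatism r \<theta> = radius2 r \<theta> - radius1 r \<theta>"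

text \<open>Support functions of surfaces in W (rotationally symmetric, strictly convex, embedded
  C^2 spheres) that are moreover C^k smooth: smoothness of the support function along a
  meridian great circle (evenness about both poles), and positive finite radii of
  curvature on [0, pi] (strict convexity), with r1 extending continuously to the poles.\<close>
definition W_support_Ck :: "nat \<Rightarrow> (real \<Rightarrow> real) \<Rightarrow> bool" where
  "W_support_Ck k r \<longleftrightarrow>
     Ck_real k r \<and>
     (\<forall>\<theta>. r (- \<theta>) = r \<theta>) \<and>
     (\<forall>\<theta>. r (pi + \<theta>) = r (pi - \<theta>)) \<and>
     (radius1_inner r \<longlongrightarrow> radius1 r 0) (at_right 0) \<and>
     (radius1_inner r \<longlongrightarrow> radius1 r pi) (at_left pi) \<and>
     (\<forall>\<theta>\<in>{0..pi}. radius1 r \<theta> > 0 \<and> radius2 r \<theta> > 0)"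

definition isolated_umbilic_at_0 :: "(real \<Rightarrow> real) \<Rightarrow> bool" where
  "isolated_umbilic_at_0 r \<longleftrightarrow> astigmatism r 0 = 0 \<and>
     (\<exists>\<epsilon>>0. \<forall>\<theta>. 0 < \<theta> \<and> \<theta> < \<epsilon> \<longrightarrow> astigmatism r \<theta> \<noteq> 0)"

definition isolated_umbilic_at_pi :: "(real \<Rightarrow> real) \<Rightarrow> bool" where
  "isolated_umbilic_at_pi r \<longleftrightarrow> astigmatism r pi = 0 \<and>
     (\<exists>\<epsilon>>0. \<forall>\<theta>. pi - \<epsilon> < \<theta> \<and> \<theta> < pi \<longrightarrow> astigmatism r \<theta> \<noteq> 0)"

text \<open>The difference quotient whose limit is the umbilic slope at a pole p.\<close>
definition slope_quotient :: "(real \<Rightarrow> real) \<Rightarrow> real \<Rightarrow> real \<Rightarrow> real" where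
  "slope_quotient r p \<theta> =
     (radius2 r \<theta> - radius2 r p) / (radius1 r \<theta> - radius1 r p)"

end

theory Submission
  imports Defs
begin

text \<open>Let \<open>s = r\<^sub>2 - r\<^sub>1\<close>. Along a meridian \<open>r\<^sub>1' = s cot \<theta>\<close>, and since the support function
  is even and \<open>C\<^sup>4\<close>, \<open>s = O(\<theta>\<^sup>2)\<close> at the pole. Near an isolated umbilic \<open>s\<close> has a fixed
  sign \<open>\<sigma>\<close>, so \<open>J = \<sigma> (r\<^sub>1 - r\<^sub>1(0))\<close> is positive with \<open>J' = \<sigma> s cot \<theta>\<close>, whence also
  \<open>J = O(\<theta>\<^sup>2)\<close>. The slope quotient equals \<open>1 + \<sigma> s / J\<close>. Were its limit below 3, then
  \<open>\<sigma> s < a J\<close> with \<open>a < 2\<close> near the pole, so \<open>J' \<le> a J / \<theta>\<close> and \<open>J\<close> would decay no faster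
  than \<open>\<theta>\<^sup>a\<close>, contradicting \<open>J = O(\<theta>\<^sup>2)\<close>. The pole \<open>\<theta> = \<pi>\<close> reduces to \<open>\<theta> = 0\<close> by the
  reflection \<open>\<theta> \<mapsto> \<pi> - \<theta>\<close>.\<close>

lemma mult_cos_le_sin:
  fixes t :: real
  assumes "0 \<le> t" "t \<le> pi"
  shows "t * cos t \<le> sin t"
proof -
  have "(\<lambda>t. sin t - t * cos t) 0 \<le> (\<lambda>t. sin t - t * cos t) t"
  proof (rule DERIV_nonneg_imp_nondecreasing[OF assms(1)])
    fix x assume "0 \<le> x" "x \<le> t"
    then show "\<exists>y. ((\<lambda>t. sin t - t * cos t) has_real_derivative y) (at x) \<and> 0 \<le> y"
      using assms sin_ge_zero[of x]
      by (intro exI[of _ "x * sin x"]) (auto intro!: derivative_eq_intros)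
  qed
  then show ?thesis by simp
qed

lemma cot_le_inverse:
  fixes t :: real
  assumes "0 < t" "t < pi"
  shows "cot t \<le> 1 / t"
  using mult_cos_le_sin[of t] sin_gt_zero[of t] assms by (simp add: cot_def field_simps)

lemma inverse_minus_cot_bound:
  fixes t :: real
  assumes "0 < t" "t \<le> 1"
  shows "\<bar>1 / t - cot t\<bar> \<le> t"
proof -
  have "(\<lambda>t. t\<^sup>2 * sin t - sin t + t * cos t) 0 \<le> (\<lambda>t. t\<^sup>2 * sin t - sin t + t * cos t) t"
  proof (rule DERIV_nonneg_imp_nondecreasing[of 0 t])
    fix x assume x: "0 \<le> x" "x \<le> t"
    then have "0 \<le> sin x" "0 \<le> cos x"
      using assms pi_gt3 by (auto intro!: sin_ge_zero cos_ge_zero)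
    with x have "0 \<le> x * sin x + x\<^sup>2 * cos x" by simp
    then show "\<exists>y. ((\<lambda>t. t\<^sup>2 * sin t - sin t + t * cos t) has_real_derivative y) (at x) \<and> 0 \<le> y"
      by (intro exI[of _ "x * sin x + x\<^sup>2 * cos x"])
        (auto intro!: derivative_eq_intros simp: algebra_simps power2_eq_square)
  qed (use assms in simp)
  then have "sin t - t * cos t \<le> t\<^sup>2 * sin t" by simp
  moreover have sin: "0 < sin t" using assms pi_gt3 by (intro sin_gt_zero) auto
  moreover have "t * cos t \<le> sin t" using mult_cos_le_sin[of t] assms pi_gt3 by simp
  ultimately have "\<bar>(sin t - t * cos t) / (t * sin t)\<bar> \<le> t"
    using assms by (simp add: field_simps power2_eq_square)
  moreover have "1 / t - cot t = (sin t - t * cos t) / (t * sin t)"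
    using assms sin by (simp add: cot_def field_simps)
  ultimately show ?thesis by simp
qed

lemma parity_of_derivative:
  fixes f f' :: "real \<Rightarrow> real"
  assumes "\<And>x. f (- x) = c * f x" "\<And>x. (f has_real_derivative f' x) (at x)"
  shows "f' (- x) = - c * f' x"
proof -
  have "((\<lambda>x. f (- x)) has_real_derivative f' (- x) * - 1) (at x)"
    by (rule DERIV_chain2[of f]) (use assms(2) in \<open>auto intro!: derivative_eq_intros\<close>)
  moreover have "((\<lambda>x. f (- x)) has_real_derivative c * f' x) (at x)"
    unfolding assms(1) using assms(2) by (auto intro!: derivative_eq_intros)
  ultimately show ?thesis using DERIV_unique by fastforce
qed

lemma continuous_nonzero_constant_sign:
  fixes f :: "real \<Rightarrow> real"
  assumes "continuous_on {a<..<b} f" "\<And>x. a < x \<Longrightarrow> x < b \<Longrightarrow> f x \<noteq> 0"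
  obtains \<sigma> where "\<sigma> = 1 \<or> \<sigma> = -1" "\<And>x. a < x \<Longrightarrow> x < b \<Longrightarrow> 0 < \<sigma> * f x"
proof -
  have conn: "connected (f ` {a<..<b})"
    using assms(1) by (rule connected_continuous_image) simp
  have "(\<forall>x\<in>{a<..<b}. 0 < f x) \<or> (\<forall>x\<in>{a<..<b}. f x < 0)"
  proof (rule ccontr)
    assume "\<not> ?thesis"
    then obtain x y where "x \<in> {a<..<b}" "y \<in> {a<..<b}" "f x \<le> 0" "0 \<le> f y"
      by (auto simp: not_less)
    then have "0 \<in> f ` {a<..<b}"
      using connectedD_interval[OF conn, of "f x" "f y" 0] by auto
    then show False using assms(2) by auto
  qed
  then show ?thesis
  proof
    assume "\<forall>x\<in>{a<..<b}. 0 < f x"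
    then show ?thesis by (intro that[of 1]) auto
  next
    assume "\<forall>x\<in>{a<..<b}. f x < 0"
    then show ?thesis by (intro that[of "-1"]) auto
  qed
qed

lemma mean_value_right_limit:
  fixes f f' :: "real \<Rightarrow> real"
  assumes lim: "(f \<longlongrightarrow> f a) (at_right a)"
    and der: "\<And>x. a < x \<Longrightarrow> x < b \<Longrightarrow> (f has_real_derivative f' x) (at x)"
    and t: "a < t" "t < b"
  obtains z where "a < z" "z < t" "f t - f a = f' z * (t - a)"
proof -
  have at: "f \<midarrow>x\<rightarrow> f x" if "a < x" "x < b" for x
    using DERIV_isCont[OF der[OF that]] by (simp add: isCont_def)
  have cont: "continuous_on {a..t} f"
    using lim at t by (intro continuous_on_IccI) (auto simp: filterlim_at_split)
  have "\<And>x. a < x \<Longrightarrow> x < t \<Longrightarrow> (f has_derivative (*) (f' x)) (at x)"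
    using der t by (simp add: has_field_derivative_def)
  from mvt[OF t(1) cont this] show ?thesis
    using that by blast
qed

lemma abs_le_mult_if_deriv_bounded:
  fixes g g' :: "real \<Rightarrow> real"
  assumes "g 0 = 0" "\<And>x. (g has_real_derivative g' x) (at x)"
    and "\<And>x. 0 \<le> x \<Longrightarrow> x \<le> t \<Longrightarrow> \<bar>g' x\<bar> \<le> M" "0 \<le> t"
  shows "\<bar>g t\<bar> \<le> M * t"
proof (cases "t = 0")
  case False
  then obtain z where "0 < z" "z < t" "g t - g 0 = (t - 0) * g' z"
    using MVT2[of 0 t g g'] assms(2,4) by auto
  with assms show ?thesis
    by (simp add: abs_mult mult.commute mult_left_mono)
qed (use assms in simp)

lemma abs_deriv_minus_difference_quotient_le:
  fixes g g' g'' :: "real \<Rightarrow> real"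
  assumes "g 0 = 0"
    and g: "\<And>x. (g has_real_derivative g' x) (at x)"
    and g': "\<And>x. (g' has_real_derivative g'' x) (at x)"
    and g'': "\<And>x. 0 \<le> x \<Longrightarrow> x \<le> t \<Longrightarrow> \<bar>g'' x\<bar> \<le> M * x"
    and "0 \<le> M" "0 < t"
  shows "\<bar>g' t - g t / t\<bar> \<le> M * t\<^sup>2"
proof -
  have "\<bar>t * g' t - g t\<bar> \<le> (M * t\<^sup>2) * t"
  proof (rule abs_le_mult_if_deriv_bounded[of "\<lambda>x. x * g' x - g x" "\<lambda>x. x * g'' x"])
    show "((\<lambda>x. x * g' x - g x) has_real_derivative x * g'' x) (at x)" for x
      using g g' by (auto intro!: derivative_eq_intros)
    show "\<bar>x * g'' x\<bar> \<le> M * t\<^sup>2" if x: "0 \<le> x" "x \<le> t" for x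
    proof -
      have "\<bar>x * g'' x\<bar> \<le> M * x * x"
        using g''[OF x] x by (simp add: abs_mult mult_left_mono mult.commute)
      also have "\<dots> \<le> M * t * t"
        using x \<open>0 \<le> M\<close> by (intro mult_mono) (auto intro: mult_left_mono)
      finally show ?thesis by (simp add: power2_eq_square mult.assoc)
    qed
  qed (use assms in auto)
  moreover have "g' t - g t / t = (t * g' t - g t) / t"
    using \<open>0 < t\<close> by (simp add: field_simps)
  ultimately show ?thesis
    using \<open>0 < t\<close> by (simp add: abs_divide divide_le_eq power2_eq_square mult.assoc)
qed

section \<open>The growth argument\<close>

lemma not_quadratically_bounded_if_log_derivative_le:
  fixes J J' :: "real \<Rightarrow> real"
  assumes "0 < b" "a < 2"
    and pos: "\<And>t. 0 < t \<Longrightarrow> t < b \<Longrightarrow> 0 < J t"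
    and der: "\<And>t. 0 < t \<Longrightarrow> t < b \<Longrightarrow> (J has_real_derivative J' t) (at t)"
    and log_der: "\<And>t. 0 < t \<Longrightarrow> t < b \<Longrightarrow> J' t \<le> a * J t / t"
    and bound: "\<And>t. 0 < t \<Longrightarrow> t < b \<Longrightarrow> J t \<le> K * t\<^sup>2"
  shows False
proof -
  define t0 where "t0 = b / 2"
  have t0: "0 < t0" "t0 < b" using \<open>0 < b\<close> by (auto simp: t0_def)
  define g where "g t = ln (J t) - a * ln t" for t
  define c where "c = exp (g t0)"
  have lower: "c * t powr a \<le> K * t\<^sup>2" if t: "0 < t" "t \<le> t0" for t
  proof -
    have "g t0 \<le> g t"
    proof (rule DERIV_nonpos_imp_nonincreasing[OF t(2)])
      fix x assume "t \<le> x" "x \<le> t0"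
      then have x: "0 < x" "x < b" using t t0 by auto
      then have "J' x / J x - a / x \<le> 0"
        using log_der[OF x] pos[OF x] by (simp add: field_simps)
      moreover have "(g has_real_derivative J' x / J x - a * (1 / x)) (at x)"
        unfolding g_def using der[OF x] pos[OF x] x by (auto intro!: derivative_eq_intros)
      ultimately show "\<exists>y. (g has_real_derivative y) (at x) \<and> y \<le> 0" by auto
    qed
    then have "exp (g t0 + a * ln t) \<le> exp (ln (J t))" by (simp add: g_def)
    then have "c * t powr a \<le> J t"
      using pos[of t] t t0 by (simp add: c_def exp_add powr_def mult.commute)
    with bound[of t] t t0 show ?thesis by simp
  qed
  have "((\<lambda>t. K * t powr (2 - a)) \<longlongrightarrow> K * 0) (at_right 0)"
    by (intro tendsto_mult tendsto_const tendsto_zero_powrI)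
      (use \<open>a < 2\<close> in \<open>auto simp: eventually_at_right_field intro!: tendsto_ident_at exI[of _ 1]\<close>)
  then have "\<forall>\<^sub>F t in at_right 0. K * t powr (2 - a) < c"
    by (simp add: c_def order_tendsto_iff)
  moreover have "\<forall>\<^sub>F t in at_right 0. 0 < t \<and> t \<le> t0"
    using t0 by (auto simp: eventually_at_right_field intro!: exI[of _ t0])
  ultimately have "\<forall>\<^sub>F t in at_right (0::real). False"
  proof eventually_elim
    case (elim t)
    then have "t\<^sup>2 = t powr a * t powr (2 - a)"
      by (simp add: powr_add[symmetric] powr_numeral)
    with lower[of t] elim show False by (simp add: mult_le_cancel_left_pos)
  qed
  then show False by simp
qed

lemma shifted_ratio_limit_ge_3:
  fixes J P :: "real \<Rightarrow> real" and \<mu> :: ereal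
  assumes e: "0 < e" "e \<le> 1"
    and J_lim: "(J \<longlongrightarrow> 0) (at_right 0)" and "J 0 = 0"
    and J_deriv: "\<And>u. 0 < u \<Longrightarrow> u < e \<Longrightarrow> (J has_real_derivative P u * cot u) (at u)"
    and P_pos: "\<And>u. 0 < u \<Longrightarrow> u < e \<Longrightarrow> 0 < P u"
    and P_le: "\<And>u. 0 < u \<Longrightarrow> u < e \<Longrightarrow> P u \<le> K * u\<^sup>2"
    and lim: "((\<lambda>u. ereal ((P u + J u) / J u)) \<longlongrightarrow> \<mu>) (at_right 0)"
  shows "3 \<le> \<mu>"
proof -
  have cot: "0 < cot u" "cot u \<le> 1 / u" if "0 < u" "u < e" for u
    using that e pi_gt3 by (auto intro!: cot_gt_zero cot_le_inverse)
  have J_pos: "0 < J t" and J_le: "J t \<le> K * t\<^sup>2" if t: "0 < t" "t < e" for t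
  proof -
    obtain z where z: "0 < z" "z < t" "J t = P z * cot z * t"
      using mean_value_right_limit[of J 0 e "\<lambda>u. P u * cot u" t] J_lim \<open>J 0 = 0\<close> J_deriv t
      by auto
    have "0 < P z * cot z" using z t P_pos cot by simp
    then show "0 < J t" using z by simp
    have "P z * cot z \<le> K * z\<^sup>2 * (1 / z)"
      using P_le[of z] P_pos[of z] cot[of z] z t by (intro mult_mono) auto
    also have "\<dots> = K * z" using z by (simp add: power2_eq_square)
    also have "\<dots> \<le> K * t"
    proof (rule mult_left_mono)
      show "0 \<le> K"
        using P_le[of z] P_pos[of z] z t by (smt (verit) mult_nonpos_nonneg zero_le_power2)
    qed (use z in simp)
    finally have "P z * cot z \<le> K * t" .
    then show "J t \<le> K * t\<^sup>2"
      using z t by (simp add: power2_eq_square mult_right_mono)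
  qed
  show ?thesis
  proof (rule ccontr)
    assume "\<not> 3 \<le> \<mu>"
    then obtain m where m: "\<mu> < ereal m" "m < 3"
      using ereal_dense2[of \<mu> 3] by (auto simp: not_le)
    have "\<forall>\<^sub>F u in at_right 0. (P u + J u) / J u < m"
      using order_tendstoD(2)[OF lim m(1)] by simp
    then obtain b where b: "0 < b" "\<And>u. 0 < u \<Longrightarrow> u < b \<Longrightarrow> (P u + J u) / J u < m"
      unfolding eventually_at_right_field by auto
    show False
    proof (rule not_quadratically_bounded_if_log_derivative_le
        [of "min b e" "m - 1" J "\<lambda>u. P u * cot u" K])
      fix u assume u: "0 < u" "u < min b e"
      then have "P u < (m - 1) * J u"
        using b(2)[of u] J_pos[of u] by (simp add: field_simps)
      with u have "P u * cot u \<le> (m - 1) * J u * (1 / u)"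
        using P_pos[of u] cot[of u] by (intro mult_mono) auto
      then show "P u * cot u \<le> (m - 1) * J u / u" by simp
    qed (use b e m J_pos J_le J_deriv in auto)
  qed
qed

lemma radii_quotient_limit_ge_3:
  fixes R1 R2 :: "real \<Rightarrow> real" and \<mu> :: ereal
  assumes e: "0 < e" "e \<le> 1"
    and R1_deriv: "\<And>u. 0 < u \<Longrightarrow> u < e \<Longrightarrow> (R1 has_real_derivative (R2 u - R1 u) * cot u) (at u)"
    and cont: "continuous_on {0<..<e} (\<lambda>u. R2 u - R1 u)"
    and isolated: "\<And>u. 0 < u \<Longrightarrow> u < e \<Longrightarrow> R2 u \<noteq> R1 u"
    and quadratic: "\<And>u. 0 < u \<Longrightarrow> u < e \<Longrightarrow> \<bar>R2 u - R1 u\<bar> \<le> K * u\<^sup>2"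
    and R1_lim: "(R1 \<longlongrightarrow> R1 0) (at_right 0)"
    and umbilic: "R2 0 = R1 0"
    and slope: "((\<lambda>u. ereal ((R2 u - R2 0) / (R1 u - R1 0))) \<longlongrightarrow> \<mu>) (at_right 0)"
  shows "3 \<le> \<mu>"
proof -
  define S where "S u = R2 u - R1 u" for u
  obtain \<sigma> where \<sigma>: "\<sigma> = 1 \<or> \<sigma> = -1" and \<sigma>S: "\<And>u. 0 < u \<Longrightarrow> u < e \<Longrightarrow> 0 < \<sigma> * S u"
    using continuous_nonzero_constant_sign[of 0 e S] cont isolated unfolding S_def by auto
  define J where "J u = \<sigma> * (R1 u - R1 0)" for u
  \<comment> \<open>also where \<open>J u = 0\<close>, as both sides are then divisions by zero\<close>
  have "(R2 u - R2 0) / (R1 u - R1 0) = (\<sigma> * S u + J u) / J u" for u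
    using \<sigma> umbilic by (auto simp: S_def J_def) (metis minus_diff_eq minus_divide_divide)
  then show ?thesis
  proof (intro shifted_ratio_limit_ge_3[of e J "\<lambda>u. \<sigma> * S u" K])
    show "(J \<longlongrightarrow> 0) (at_right 0)"
      unfolding J_def using R1_lim by (auto intro!: tendsto_eq_intros)
    show "(J has_real_derivative \<sigma> * S u * cot u) (at u)" if "0 < u" "u < e" for u
      unfolding J_def S_def using R1_deriv[OF that] by (auto intro!: derivative_eq_intros)
    show "\<sigma> * S u \<le> K * u\<^sup>2" if "0 < u" "u < e" for u
      using \<sigma> quadratic[OF that] by (auto simp: S_def)
  qed (use e \<sigma>S slope in \<open>auto simp: J_def\<close>)
qed

section \<open>The radii of curvature near a pole\<close>

lemma Ck_real_has_real_derivative: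
  assumes "Ck_real k f" "j < k"
  shows "((deriv ^^ j) f has_real_derivative (deriv ^^ Suc j) f x) (at x)"
  using assms by (simp add: Ck_real_def DERIV_deriv_iff_real_differentiable)

lemma Ck_real_continuous_on_deriv:
  assumes "Ck_real k f" "j \<le> k"
  shows "continuous_on UNIV ((deriv ^^ j) f)"
proof (cases "j = k")
  case False
  with assms have "\<And>x. isCont ((deriv ^^ j) f) x"
    using Ck_real_has_real_derivative DERIV_isCont by (metis le_neq_implies_less)
  then show ?thesis by (simp add: continuous_at_imp_continuous_on)
qed (use assms in \<open>simp add: Ck_real_def\<close>)

lemma astigmatism_interior:
  assumes "0 < \<theta>" "\<theta> < pi"
  shows "astigmatism f \<theta> = deriv (deriv f) \<theta> - deriv f \<theta> * cot \<theta>"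
  using assms by (simp add: astigmatism_def radius1_def radius1_inner_def radius2_def cot_def)

text \<open>The Codazzi equation of a surface of revolution.\<close>

lemma radius1_has_real_derivative:
  assumes "Ck_real k f" "2 \<le> k" "0 < \<theta>" "\<theta> < pi"
  shows "(radius1 f has_real_derivative astigmatism f \<theta> * cot \<theta>) (at \<theta>)"
proof -
  have D0: "\<And>x. (f has_real_derivative deriv f x) (at x)"
    and D1: "\<And>x. (deriv f has_real_derivative deriv (deriv f) x) (at x)"
    using Ck_real_has_real_derivative[OF assms(1), of 0] Ck_real_has_real_derivative[OF assms(1), of 1]
      assms(2) by auto
  have sin: "sin \<theta> \<noteq> 0" using sin_gt_zero assms by force
  have "(radius1_inner f has_real_derivative deriv f \<theta> +
      ((deriv (deriv f) \<theta> * cos \<theta> + deriv f \<theta> * - sin \<theta>) * sin \<theta>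
        - deriv f \<theta> * cos \<theta> * cos \<theta>) / (sin \<theta> * sin \<theta>)) (at \<theta>)"
    unfolding radius1_inner_def using sin by (auto intro!: derivative_eq_intros D0 D1)
  also have "deriv f \<theta> +
      ((deriv (deriv f) \<theta> * cos \<theta> + deriv f \<theta> * - sin \<theta>) * sin \<theta>
        - deriv f \<theta> * cos \<theta> * cos \<theta>) / (sin \<theta> * sin \<theta>)
      = astigmatism f \<theta> * cot \<theta>"
    using sin assms by (simp add: astigmatism_interior cot_def field_simps)
  finally have "(radius1_inner f has_real_derivative astigmatism f \<theta> * cot \<theta>) (at \<theta>)" .
  then show ?thesis
    by (rule has_field_derivative_transform_within_open[where S = "{0<..<pi}"])
      (use assms in \<open>auto simp: radius1_def\<close>)
qed

lemma isCont_astigmatism: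
  assumes "Ck_real k f" "2 \<le> k" "0 < \<theta>" "\<theta> < pi"
  shows "isCont (astigmatism f) \<theta>"
proof -
  have "continuous_on UNIV ((deriv ^^ 2) f)" "continuous_on UNIV ((deriv ^^ 0) f)"
    using Ck_real_continuous_on_deriv[OF assms(1), of 2] Ck_real_continuous_on_deriv[OF assms(1), of 0]
      assms(2) by auto
  then have "isCont (radius2 f) \<theta>"
    unfolding radius2_def by (intro continuous_intros) (auto simp: numeral_eq_Suc continuous_on_eq_continuous_at)
  moreover have "isCont (radius1 f) \<theta>"
    using radius1_has_real_derivative[OF assms] by (rule DERIV_isCont)
  ultimately show ?thesis
    unfolding astigmatism_def by (intro continuous_intros)
qed

lemma astigmatism_quadratic_bound:
  assumes f: "Ck_real 4 f" and even: "\<And>\<theta>. f (- \<theta>) = f \<theta>"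
  obtains K where "\<And>t. 0 < t \<Longrightarrow> t \<le> 1 \<Longrightarrow> \<bar>astigmatism f t\<bar> \<le> K * t\<^sup>2"
proof -
  define d1 where "d1 = deriv f"
  define d2 where "d2 = deriv d1"
  define d3 where "d3 = deriv d2"
  define d4 where "d4 = deriv d3"
  have D0: "\<And>x. (f has_real_derivative d1 x) (at x)"
    and D1: "\<And>x. (d1 has_real_derivative d2 x) (at x)"
    and D2: "\<And>x. (d2 has_real_derivative d3 x) (at x)"
    and D3: "\<And>x. (d3 has_real_derivative d4 x) (at x)"
    using Ck_real_has_real_derivative[OF f, of 0] Ck_real_has_real_derivative[OF f, of 1]
      Ck_real_has_real_derivative[OF f, of 2] Ck_real_has_real_derivative[OF f, of 3]
    by (simp_all add: d1_def d2_def d3_def d4_def numeral_eq_Suc)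
  have "continuous_on {0..1} d2" "continuous_on {0..1} d4"
    using Ck_real_continuous_on_deriv[OF f, of 2] Ck_real_continuous_on_deriv[OF f, of 4]
    by (auto simp: d1_def d2_def d3_def d4_def numeral_eq_Suc intro: continuous_on_subset)
  then obtain M2 M4 where M2: "\<And>x. x \<in> {0..1} \<Longrightarrow> \<bar>d2 x\<bar> \<le> M2"
    and M4: "0 \<le> M4" "\<And>x. x \<in> {0..1} \<Longrightarrow> \<bar>d4 x\<bar> \<le> M4"
    using continuous_on_compact_bound[OF compact_Icc] by (metis real_norm_def)
  have "d1 (- x) = - d1 x" for x using parity_of_derivative[of f 1 d1] even D0 by simp
  then have odd1: "d1 (- x) = - d1 x" and odd3: "d3 (- x) = - d3 x" for x
    using parity_of_derivative[of d2 1 d3] parity_of_derivative[of d1 "-1" d2] D1 D2 by simp_all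
  have d1_le: "\<bar>d1 t\<bar> \<le> M2 * t" if "0 < t" "t \<le> 1" for t
    using odd1[of 0] D1 M2 that by (intro abs_le_mult_if_deriv_bounded) auto
  have d2_approx: "\<bar>d2 t - d1 t / t\<bar> \<le> M4 * t\<^sup>2" if "0 < t" "t \<le> 1" for t
  proof (rule abs_deriv_minus_difference_quotient_le[OF _ D1 D2 _ M4(1) \<open>0 < t\<close>])
    show "\<bar>d3 x\<bar> \<le> M4 * x" if "0 \<le> x" "x \<le> t" for x
      using odd3[of 0] D3 M4 that \<open>t \<le> 1\<close> by (intro abs_le_mult_if_deriv_bounded) auto
  qed (use odd1[of 0] in simp)
  show ?thesis
  proof
    fix t :: real assume t: "0 < t" "t \<le> 1"
    then have "astigmatism f t = (d2 t - d1 t / t) + d1 t * (1 / t - cot t)"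
      using pi_gt3 by (simp add: astigmatism_interior d1_def d2_def algebra_simps)
    also have "\<bar>\<dots>\<bar> \<le> M4 * t\<^sup>2 + M2 * t * t"
    proof -
      have "\<bar>d1 t * (1 / t - cot t)\<bar> \<le> M2 * t * t"
        unfolding abs_mult using d1_le[OF t] inverse_minus_cot_bound[OF t]
        by (intro mult_mono) auto
      then show ?thesis
        using d2_approx[OF t] abs_triangle_ineq[of "d2 t - d1 t / t"] by linarith
    qed
    finally show "\<bar>astigmatism f t\<bar> \<le> (M4 + M2) * t\<^sup>2"
      by (simp add: algebra_simps power2_eq_square)
  qed
qed

lemma umbilic_slope_ge_3_at_0:
  fixes f :: "real \<Rightarrow> real" and \<mu> :: ereal
  assumes f: "Ck_real 4 f" and even: "\<And>\<theta>. f (- \<theta>) = f \<theta>"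
    and r1_lim: "(radius1_inner f \<longlongrightarrow> radius1 f 0) (at_right 0)"
    and umbilic: "isolated_umbilic_at_0 f"
    and slope: "((\<lambda>\<theta>. ereal (slope_quotient f 0 \<theta>)) \<longlongrightarrow> \<mu>) (at_right 0)"
  shows "3 \<le> \<mu>"
proof -
  obtain \<epsilon> where "0 < \<epsilon>" and nonumbilic: "\<And>\<theta>. 0 < \<theta> \<Longrightarrow> \<theta> < \<epsilon> \<Longrightarrow> astigmatism f \<theta> \<noteq> 0"
    using umbilic unfolding isolated_umbilic_at_0_def by blast
  obtain K where K: "\<And>t. 0 < t \<Longrightarrow> t \<le> 1 \<Longrightarrow> \<bar>astigmatism f t\<bar> \<le> K * t\<^sup>2"
    using astigmatism_quadratic_bound[OF f even] by blast
  define e where "e = min \<epsilon> 1"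
  have e: "0 < e" "e \<le> 1" "e < pi" using \<open>0 < \<epsilon>\<close> pi_gt3 by (auto simp: e_def)
  show ?thesis
  proof (rule radii_quotient_limit_ge_3[of e "radius1 f" "radius2 f" K])
    show "(radius1 f has_real_derivative (radius2 f u - radius1 f u) * cot u) (at u)"
      if "0 < u" "u < e" for u
      using radius1_has_real_derivative[OF f, of u] that e by (simp add: astigmatism_def)
    show "continuous_on {0<..<e} (\<lambda>u. radius2 f u - radius1 f u)"
      using isCont_astigmatism[OF f] e
      by (intro continuous_at_imp_continuous_on) (auto simp: astigmatism_def[abs_def])
    show "(radius1 f \<longlongrightarrow> radius1 f 0) (at_right 0)"
    proof (rule Lim_transform_eventually[OF r1_lim])
      show "\<forall>\<^sub>F \<theta> in at_right 0. radius1_inner f \<theta> = radius1 f \<theta>"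
        using eventually_at_right_real[OF pi_gt_zero] by eventually_elim (auto simp: radius1_def)
    qed
  qed (use e nonumbilic K umbilic slope in
      \<open>auto simp: e_def astigmatism_def isolated_umbilic_at_0_def slope_quotient_def\<close>)
qed

section \<open>Reflection through the equator\<close>

lemma filterlim_at_left_reflect:
  fixes f :: "real \<Rightarrow> 'a"
  assumes "filterlim f F (at_left c)"
  shows "filterlim (\<lambda>u. f (c - u)) F (at_right 0)"
proof -
  have "filterlim (\<lambda>x. f (- x)) F (at_right (- c))"
    using assms by (rule filterlim_at_left_to_right[THEN iffD1])
  then have "filterlim (\<lambda>x. f (- (x + - c))) F (at_right 0)"
    by (rule filterlim_at_right_to_0[THEN iffD1])
  then show ?thesis by simp
qed

lemma has_real_derivative_reflect:
  assumes "(h has_real_derivative h') (at (c - x))"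
  shows "((\<lambda>x. a * h (c - x)) has_real_derivative - a * h') (at x)"
proof -
  have "((\<lambda>x. c - x) has_real_derivative - 1) (at x)"
    by (rule derivative_eq_intros refl)+ simp
  from DERIV_cmult[OF DERIV_chain2[OF assms this], of a] show ?thesis by simp
qed

lemma deriv_iterate_reflect:
  assumes f: "Ck_real k f" and "j \<le> k"
  shows "(deriv ^^ j) (\<lambda>x. f (c - x)) = (\<lambda>x. (- 1) ^ j * (deriv ^^ j) f (c - x))"
  using \<open>j \<le> k\<close>
proof (induction j)
  case (Suc j)
  define G where "G x = (- 1) ^ j * (deriv ^^ j) f (c - x)" for x
  have "(deriv ^^ Suc j) (\<lambda>x. f (c - x)) = deriv G"
    using Suc by (simp add: G_def[abs_def])
  also have "deriv G = (\<lambda>x. (- 1) ^ Suc j * (deriv ^^ Suc j) f (c - x))"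
    using has_real_derivative_reflect[OF Ck_real_has_real_derivative[OF f]] Suc.prems
    by (intro ext DERIV_imp_deriv) (simp add: G_def[abs_def])
  finally show ?case .
qed simp

lemma Ck_real_reflect:
  assumes f: "Ck_real k f"
  shows "Ck_real k (\<lambda>x. f (c - x))"
  unfolding Ck_real_def deriv_iterate_reflect[OF f order.refl]
proof (intro conjI allI impI)
  fix j x assume "j < k"
  then show "(deriv ^^ j) (\<lambda>x. f (c - x)) differentiable at x"
    unfolding deriv_iterate_reflect[OF f less_imp_le[OF \<open>j < k\<close>]] real_differentiable_def
    using has_real_derivative_reflect[OF Ck_real_has_real_derivative[OF f \<open>j < k\<close>]] by blast
next
  show "continuous_on UNIV (\<lambda>x. (- 1) ^ k * (deriv ^^ k) f (c - x))"
  proof (intro continuous_on_mult continuous_on_const)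
    show "continuous_on UNIV (\<lambda>x. (deriv ^^ k) f (c - x))"
      using Ck_real_continuous_on_deriv[OF f order.refl]
      by (rule continuous_on_compose2) (auto intro: continuous_on_diff continuous_on_id continuous_on_const)
  qed
qed

lemma radius1_inner_reflect:
  assumes "Ck_real k f" "1 \<le> k"
  shows "radius1_inner (\<lambda>x. f (pi - x)) \<theta> = radius1_inner f (pi - \<theta>)"
  using deriv_iterate_reflect[OF assms(1), of 1 pi] assms(2)
  by (simp add: radius1_inner_def fun_eq_iff)

lemma radius2_reflect:
  assumes "Ck_real k f" "2 \<le> k"
  shows "radius2 (\<lambda>x. f (pi - x)) \<theta> = radius2 f (pi - \<theta>)"
  using deriv_iterate_reflect[OF assms(1), of 2 pi] assms(2)
  by (simp add: radius2_def fun_eq_iff numeral_eq_Suc)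

lemma umbilic_slope_ge_3_at_pi:
  fixes f :: "real \<Rightarrow> real" and \<mu> :: ereal
  assumes f: "Ck_real 4 f" and sym: "\<And>\<theta>. f (pi + \<theta>) = f (pi - \<theta>)"
    and r1_lim: "(radius1_inner f \<longlongrightarrow> radius1 f pi) (at_left pi)"
    and umbilic: "isolated_umbilic_at_pi f"
    and slope: "((\<lambda>\<theta>. ereal (slope_quotient f pi \<theta>)) \<longlongrightarrow> \<mu>) (at_left pi)"
  shows "3 \<le> \<mu>"
proof -
  define g where "g x = f (pi - x)" for x
  have g: "Ck_real 4 g"
    using Ck_real_reflect[OF f] by (simp add: g_def[abs_def])
  have inner: "radius1_inner g = (\<lambda>\<theta>. radius1_inner f (pi - \<theta>))"
    using radius1_inner_reflect[OF f] by (simp add: g_def[abs_def] fun_eq_iff)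
  have radius2: "radius2 g \<theta> = radius2 f (pi - \<theta>)" for \<theta>
    using radius2_reflect[OF f] by (simp add: g_def[abs_def])
  have g_lim: "(radius1_inner g \<longlongrightarrow> radius1 f pi) (at_right 0)"
    unfolding inner using r1_lim by (rule filterlim_at_left_reflect)
  then have radius1_0: "radius1 g 0 = radius1 f pi"
    by (simp add: radius1_def tendsto_Lim)
  have radius1: "radius1 g \<theta> = radius1 f (pi - \<theta>)" if "0 < \<theta>" "\<theta> < pi" for \<theta>
    using that by (simp add: radius1_def inner)
  have astigmatism: "astigmatism g \<theta> = astigmatism f (pi - \<theta>)" if "0 \<le> \<theta>" "\<theta> < pi" for \<theta>
    using that radius1 radius1_0 radius2 by (cases "\<theta> = 0") (auto simp: astigmatism_def)
  have "\<And>\<theta>. g (- \<theta>) = g \<theta>"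
    using sym by (simp add: g_def)
  moreover have "(radius1_inner g \<longlongrightarrow> radius1 g 0) (at_right 0)"
    using g_lim radius1_0 by simp
  moreover have "isolated_umbilic_at_0 g"
    using umbilic pi_gt_zero unfolding isolated_umbilic_at_0_def isolated_umbilic_at_pi_def
    by (force simp: astigmatism intro: exI[of _ "min _ pi"])
  moreover have "((\<lambda>\<theta>. ereal (slope_quotient g 0 \<theta>)) \<longlongrightarrow> \<mu>) (at_right 0)"
  proof (rule Lim_transform_eventually[OF filterlim_at_left_reflect[OF slope]])
    show "\<forall>\<^sub>F \<theta> in at_right 0. ereal (slope_quotient f pi (pi - \<theta>)) = ereal (slope_quotient g 0 \<theta>)"
      using eventually_at_right_real[OF pi_gt_zero]
      by eventually_elim (simp add: slope_quotient_def radius1 radius1_0 radius2)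
  qed
  ultimately show ?thesis
    by (rule umbilic_slope_ge_3_at_0[OF g])
qed

theorem proposition2p4:
  fixes r :: "real \<Rightarrow> real"
  assumes "W_support_Ck 4 r"
    and "isolated_umbilic_at_0 r"
    and "isolated_umbilic_at_pi r"
  shows "(\<forall>\<mu>0::ereal. ((\<lambda>\<theta>. ereal (slope_quotient r 0 \<theta>)) \<longlongrightarrow> \<mu>0) (at_right 0) \<longrightarrow> \<mu>0 \<ge> 3) \<and>
         (\<forall>\<mu>pi::ereal. ((\<lambda>\<theta>. ereal (slope_quotient r pi \<theta>)) \<longlongrightarrow> \<mu>pi) (at_left pi) \<longrightarrow> \<mu>pi \<ge> 3)"
  using assms umbilic_slope_ge_3_at_0[of r] umbilic_slope_ge_3_at_pi[of r]
  unfolding W_support_Ck_def by auto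

end
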